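(* Let $y,z$ be nonzero complex numbers and let $u_n=u_n(y,z)$, $v_n=v_n(y,z)$ be the Lucas sequences of the first and second kind. Let $x,r\in\mathbb{C}$ and let $c,n$ be integers with $n\ge c$; if $c<0$ assume moreover $x\neq 0$. Then \[ \sum_{k=c}^n r^{n-k}x^k\big(r v_k(y,z)+(xy-2r)u_{k+1}(y,z)\big)=x^{n+1}y\,u_{n+1}(y,z)-r^{n-c+1}x^c y\,u_c(y,z) \] and \[ \sum_{k=c}^n r^{n-k}x^k\big((y^2-4z)r\,u_k(y,z)+(xy-2r)v_{k+1}(y,z)\big)=x^{n+1}y\,v_{n+1}(y,z)-r^{n-c+1}x^c y\,v_c(y,z). \]
   Context: For nonzero complex numbers $y,z$, the Lucas sequences $u_n(y,z)$ and $v_n(y,z)$ are defined by $u_0=0$, $u_1=1$, $v_0=2$, $v_1=y$ and $w_n=y\,w_{n-1}-z\,w_{n-2}$ for $n\ge 2$ (for $w=u$ and $w=v$), and extended to negative indices by $u_{-n}(y,z)=-u_n(y,z)/z^n$ and $v_{-n}(y,z)=v_n(y,z)/z^n$. *)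

theory Defs
  imports Complex_Main
begin

fun lucas_u_nat :: "complex \<Rightarrow> complex \<Rightarrow> nat \<Rightarrow> complex" where
  "lucas_u_nat y z 0 = 0"
| "lucas_u_nat y z (Suc 0) = 1"
| "lucas_u_nat y z (Suc (Suc n)) = y * lucas_u_nat y z (Suc n) - z * lucas_u_nat y z n"

fun lucas_v_nat :: "complex \<Rightarrow> complex \<Rightarrow> nat \<Rightarrow> complex" where
  "lucas_v_nat y z 0 = 2"
| "lucas_v_nat y z (Suc 0) = y"
| "lucas_v_nat y z (Suc (Suc n)) = y * lucas_v_nat y z (Suc n) - z * lucas_v_nat y z n"

definition lucas_u :: "complex \<Rightarrow> complex \<Rightarrow> int \<Rightarrow> complex" where
  "lucas_u y z k = (if k \<ge> 0 then lucas_u_nat y z (nat k)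
                    else - lucas_u_nat y z (nat (-k)) / z ^ nat (-k))"

definition lucas_v :: "complex \<Rightarrow> complex \<Rightarrow> int \<Rightarrow> complex" where
  "lucas_v y z k = (if k \<ge> 0 then lucas_v_nat y z (nat k)
                    else lucas_v_nat y z (nat (-k)) / z ^ nat (-k))"

end

theory Submission
  imports Defs
begin

text \<open>Both sums telescope. The identities \<open>v k = 2 u (k + 1) - y u k\<close> and
  \<open>(y\<^sup>2 - 4 z) u k = 2 v (k + 1) - y v k\<close>, valid for all integers \<open>k\<close>, turn the
  \<open>k\<close>-th summand into \<open>r\<^bsup>n-k\<^esup> x\<^sup>k (x w (k + 1) - r w k)\<close> with \<open>w = y u\<close> resp.
  \<open>w = y v\<close>, and this is \<open>F (k + 1) - F k\<close> for \<open>F k = r\<^bsup>n-k+1\<^esup> x\<^sup>k w k\<close>.\<close>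

lemma lucas_v_nat_Suc_eq:
  "lucas_v_nat y z (Suc m) = y * lucas_u_nat y z (Suc m) - 2 * z * lucas_u_nat y z m"
proof (induction y z m rule: lucas_u_nat.induct)
  case (3 y z n)
  have "lucas_v_nat y z (Suc (Suc (Suc n)))
      = y * lucas_v_nat y z (Suc (Suc n)) - z * lucas_v_nat y z (Suc n)"
    by (rule lucas_v_nat.simps(3))
  also have "\<dots> = y * (y * lucas_u_nat y z (Suc (Suc n)) - 2 * z * lucas_u_nat y z (Suc n))
                 - z * (y * lucas_u_nat y z (Suc n) - 2 * z * lucas_u_nat y z n)"
    by (simp only: 3)
  also have "\<dots> = y * lucas_u_nat y z (Suc (Suc (Suc n))) - 2 * z * lucas_u_nat y z (Suc (Suc n))"
    by (simp add: algebra_simps)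
  finally show ?case .
qed (simp_all add: algebra_simps)

lemma lucas_v_nat_eq:
  "lucas_v_nat y z m = 2 * lucas_u_nat y z (Suc m) - y * lucas_u_nat y z m"
  by (cases m) (simp_all add: lucas_v_nat_Suc_eq algebra_simps)

lemma lucas_u_nat_Suc_disc_eq:
  "(y\<^sup>2 - 4 * z) * lucas_u_nat y z (Suc m) = y * lucas_v_nat y z (Suc m) - 2 * z * lucas_v_nat y z m"
  by (simp only: lucas_v_nat_Suc_eq lucas_v_nat_eq[of y z m]) (simp add: algebra_simps power2_eq_square)

lemma lucas_u_nat_disc_eq:
  "(y\<^sup>2 - 4 * z) * lucas_u_nat y z m = 2 * lucas_v_nat y z (Suc m) - y * lucas_v_nat y z m"
  by (simp only: lucas_v_nat_Suc_eq lucas_v_nat_eq[of y z m]) (simp add: algebra_simps power2_eq_square)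

lemma lucas_u_uminus: "lucas_u y z (- int m) = - lucas_u_nat y z m / z ^ m"
  unfolding lucas_u_def by (cases "m = 0") auto

lemma lucas_v_uminus: "lucas_v y z (- int m) = lucas_v_nat y z m / z ^ m"
  unfolding lucas_v_def by (cases "m = 0") auto

lemma negative_int_cases:
  fixes k :: int
  assumes "\<not> 0 \<le> k"
  obtains m where "k = - int (Suc m)" and "k + 1 = - int m"
proof
  show "k = - int (Suc (nat (- k) - 1))" and "k + 1 = - int (nat (- k) - 1)"
    using assms by simp_all
qed

lemma lucas_v_eq:
  assumes "z \<noteq> 0"
  shows "lucas_v y z k = 2 * lucas_u y z (k + 1) - y * lucas_u y z k"
proof (cases "0 \<le> k")
  case True
  then have "nat (k + 1) = Suc (nat k)" by simp
  with True show ?thesis by (simp add: lucas_u_def lucas_v_def lucas_v_nat_eq)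
next
  case False
  then obtain m where k: "k = - int (Suc m)" and k1: "k + 1 = - int m"
    by (rule negative_int_cases)
  show ?thesis unfolding k1 unfolding k lucas_u_uminus lucas_v_uminus
    using assms by (simp add: lucas_v_nat_Suc_eq field_simps)
qed

lemma lucas_u_disc_eq:
  assumes "z \<noteq> 0"
  shows "(y\<^sup>2 - 4 * z) * lucas_u y z k = 2 * lucas_v y z (k + 1) - y * lucas_v y z k"
proof (cases "0 \<le> k")
  case True
  then have "nat (k + 1) = Suc (nat k)" by simp
  with True show ?thesis by (simp add: lucas_u_def lucas_v_def lucas_u_nat_disc_eq)
next
  case False
  then obtain m where k: "k = - int (Suc m)" and k1: "k + 1 = - int m"
    by (rule negative_int_cases)
  have "2 * (lucas_v_nat y z m / z ^ m) - y * (lucas_v_nat y z (Suc m) / z ^ Suc m)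
      = - (y * lucas_v_nat y z (Suc m) - 2 * z * lucas_v_nat y z m) / z ^ Suc m"
    using assms by (simp add: field_simps)
  also have "\<dots> = (y\<^sup>2 - 4 * z) * (- lucas_u_nat y z (Suc m) / z ^ Suc m)"
    by (simp only: lucas_u_nat_Suc_disc_eq [symmetric]) simp
  finally show ?thesis unfolding k1 unfolding k lucas_u_uminus lucas_v_uminus by simp
qed

lemma sum_int_telescope:
  fixes f :: "int \<Rightarrow> 'a::ab_group_add"
  assumes "c \<le> n + 1"
  shows "(\<Sum>k=c..n. f (k + 1) - f k) = f (n + 1) - f c"
  using assms
proof (induction "n + 1" arbitrary: n rule: int_ge_induct)
  case base
  then show ?case by simp
next
  case (step m)
  then have "{c..m} = insert m {c..m - 1}" and "m \<notin> {c..m - 1}" by auto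
  with step show ?case by simp
qed

lemma sum_powi_telescope:
  fixes w :: "int \<Rightarrow> 'a::field"
  assumes "c \<le> n" and "c < 0 \<Longrightarrow> x \<noteq> 0"
  shows "(\<Sum>k=c..n. r powi (n - k) * x powi k * (x * w (k + 1) - r * w k))
       = x powi (n + 1) * w (n + 1) - r powi (n - c + 1) * x powi c * w c"
proof -
  define F where "F k = r powi (n - k + 1) * x powi k * w k" for k
  have "r powi (n - k) * x powi k * (x * w (k + 1) - r * w k) = F (k + 1) - F k"
    if "k \<in> {c..n}" for k
  proof -
    have "x powi (k + 1) = x powi k * x"
      using that assms(2) by (intro power_int_add_1) auto
    moreover have "r powi (n - k + 1) = r powi (n - k) * r"
      using that by (intro power_int_add_1) auto
    ultimately show ?thesis by (simp add: F_def algebra_simps)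
  qed
  then have "(\<Sum>k=c..n. r powi (n - k) * x powi k * (x * w (k + 1) - r * w k))
           = (\<Sum>k=c..n. F (k + 1) - F k)"
    by (rule sum.cong[OF refl])
  also have "\<dots> = F (n + 1) - F c"
    using assms(1) by (intro sum_int_telescope) simp
  finally show ?thesis by (simp add: F_def)
qed

theorem theorem1:
  fixes y z x r :: complex and c n :: int
  assumes "y \<noteq> 0" and "z \<noteq> 0" and "c \<le> n" and "c < 0 \<Longrightarrow> x \<noteq> 0"
  shows "((\<Sum>k=c..n. r powi (n - k) * x powi k *
            (r * lucas_v y z k + (x * y - 2 * r) * lucas_u y z (k + 1)))
         = x powi (n + 1) * y * lucas_u y z (n + 1)
           - r powi (n - c + 1) * x powi c * y * lucas_u y z c) \<and>
         ((\<Sum>k=c..n. r powi (n - k) * x powi k *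
            ((y^2 - 4 * z) * r * lucas_u y z k + (x * y - 2 * r) * lucas_v y z (k + 1)))
         = x powi (n + 1) * y * lucas_v y z (n + 1)
           - r powi (n - c + 1) * x powi c * y * lucas_v y z c)"
proof -
  have u_summand: "r * lucas_v y z k + (x * y - 2 * r) * lucas_u y z (k + 1)
      = x * (y * lucas_u y z (k + 1)) - r * (y * lucas_u y z k)" for k
    by (simp add: lucas_v_eq[OF assms(2)] algebra_simps)
  have v_summand: "(y^2 - 4 * z) * r * lucas_u y z k + (x * y - 2 * r) * lucas_v y z (k + 1)
      = x * (y * lucas_v y z (k + 1)) - r * (y * lucas_v y z k)" for k
  proof -
    have "(y^2 - 4 * z) * r * lucas_u y z k = r * (2 * lucas_v y z (k + 1) - y * lucas_v y z k)"
      using lucas_u_disc_eq[OF assms(2), of y k] by (metis mult.commute mult.assoc)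
    then show ?thesis by (simp add: algebra_simps)
  qed
  show ?thesis
    unfolding u_summand v_summand
    using sum_powi_telescope[OF assms(3,4), of r "\<lambda>k. y * lucas_u y z k"]
          sum_powi_telescope[OF assms(3,4), of r "\<lambda>k. y * lucas_v y z k"]
    by (simp add: mult.assoc)
qed

end
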